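(* For every algebra $A$ (not necessarily unital or commutative) we have $\mathfrak{P}^{\mathrm{nc}}(A)=0$.
   Context: Fix a field $\mathbb{F}$; algebras are associative $\mathbb{F}$-algebras, not necessarily unital or commutative. For an algebra $A$, $\mathfrak{P}^{\mathrm{nc}}(A)$ is the set of $a\in A$ such that for every algebra $C$ and every algebra morphism $\varphi:A\to C[x]$, $\varphi(a)$ is a constant polynomial (lies in $C\subseteq C[x]$). (The paper defines it via a universal pro-algebra $\mathfrak{M}^{\mathrm{nc}}_{A,\mathbb{F}[x]}$ and proves it equals this set.) *)

theory Defs
  imports Main
begin

record ('f, 'a) nc_alg =
  carrier :: "'a set"
  add :: "'a \<Rightarrow> 'a \<Rightarrow> 'a"
  mul :: "'a \<Rightarrow> 'a \<Rightarrow> 'a"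
  zero :: "'a"
  smul :: "'f \<Rightarrow> 'a \<Rightarrow> 'a"

definition is_alg :: "('f::field, 'a) nc_alg \<Rightarrow> bool" where
  "is_alg A \<longleftrightarrow>
     zero A \<in> carrier A \<and>
     (\<forall>x\<in>carrier A. \<forall>y\<in>carrier A. add A x y \<in> carrier A) \<and>
     (\<forall>x\<in>carrier A. \<forall>y\<in>carrier A. mul A x y \<in> carrier A) \<and>
     (\<forall>c. \<forall>x\<in>carrier A. smul A c x \<in> carrier A) \<and>
     (\<forall>x\<in>carrier A. \<forall>y\<in>carrier A. \<forall>z\<in>carrier A. add A (add A x y) z = add A x (add A y z)) \<and>
     (\<forall>x\<in>carrier A. \<forall>y\<in>carrier A. add A x y = add A y x) \<and>
     (\<forall>x\<in>carrier A. add A (zero A) x = x) \<and>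
     (\<forall>x\<in>carrier A. \<exists>y\<in>carrier A. add A x y = zero A) \<and>
     (\<forall>x\<in>carrier A. \<forall>y\<in>carrier A. \<forall>z\<in>carrier A. mul A (mul A x y) z = mul A x (mul A y z)) \<and>
     (\<forall>x\<in>carrier A. \<forall>y\<in>carrier A. \<forall>z\<in>carrier A. mul A x (add A y z) = add A (mul A x y) (mul A x z)) \<and>
     (\<forall>x\<in>carrier A. \<forall>y\<in>carrier A. \<forall>z\<in>carrier A. mul A (add A x y) z = add A (mul A x z) (mul A y z)) \<and>
     (\<forall>c. \<forall>x\<in>carrier A. \<forall>y\<in>carrier A. smul A c (add A x y) = add A (smul A c x) (smul A c y)) \<and>
     (\<forall>c d. \<forall>x\<in>carrier A. smul A (c + d) x = add A (smul A c x) (smul A d x)) \<and>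
     (\<forall>c d. \<forall>x\<in>carrier A. smul A (c * d) x = smul A c (smul A d x)) \<and>
     (\<forall>x\<in>carrier A. smul A 1 x = x) \<and>
     (\<forall>c. \<forall>x\<in>carrier A. \<forall>y\<in>carrier A. smul A c (mul A x y) = mul A (smul A c x) y) \<and>
     (\<forall>c. \<forall>x\<in>carrier A. \<forall>y\<in>carrier A. smul A c (mul A x y) = mul A x (smul A c y))"

primrec alg_sum :: "('f, 'a) nc_alg \<Rightarrow> (nat \<Rightarrow> 'a) \<Rightarrow> nat \<Rightarrow> 'a" where
  "alg_sum C f 0 = zero C"
| "alg_sum C f (Suc n) = add C (alg_sum C f n) (f n)"

definition poly_alg :: "('f, 'c) nc_alg \<Rightarrow> ('f, nat \<Rightarrow> 'c) nc_alg" where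
  "poly_alg C =
     \<lparr> carrier = {p. (\<forall>n. p n \<in> carrier C) \<and> finite {n. p n \<noteq> zero C}},
       add = (\<lambda>p q n. add C (p n) (q n)),
       mul = (\<lambda>p q n. alg_sum C (\<lambda>i. mul C (p i) (q (n - i))) (Suc n)),
       zero = (\<lambda>n. zero C),
       smul = (\<lambda>c p n. smul C c (p n)) \<rparr>"

definition alg_hom :: "('f, 'a) nc_alg \<Rightarrow> ('f, 'b) nc_alg \<Rightarrow> ('a \<Rightarrow> 'b) \<Rightarrow> bool" where
  "alg_hom A B \<phi> \<longleftrightarrow>
     (\<forall>x\<in>carrier A. \<phi> x \<in> carrier B) \<and>
     (\<forall>x\<in>carrier A. \<forall>y\<in>carrier A. \<phi> (add A x y) = add B (\<phi> x) (\<phi> y)) \<and>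
     (\<forall>x\<in>carrier A. \<forall>y\<in>carrier A. \<phi> (mul A x y) = mul B (\<phi> x) (\<phi> y)) \<and>
     (\<forall>c. \<forall>x\<in>carrier A. \<phi> (smul A c x) = smul B c (\<phi> x))"

text \<open>C ranges over all algebras whose carrier lives in the type 'a + 'f + nat; this type is
  large enough (cardinality \<ge> |A| + |F| + aleph_0) that every algebra C relevant for a
  morphism from A can be replaced by an isomorphic copy of a subalgebra living there.\<close>
definition Pnc :: "('f::field, 'a) nc_alg \<Rightarrow> 'a set" where
  "Pnc A = {a \<in> carrier A.
     \<forall>(C :: ('f, 'a + 'f + nat) nc_alg) \<phi>.
        is_alg C \<and> alg_hom A (poly_alg C) \<phi> \<longrightarrow> (\<forall>n\<ge>1. \<phi> a n = zero C)}"

end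

theory Submission
  imports Defs
begin

text \<open>Every algebra A has a morphism into a polynomial algebra P[x] that sends each nonzero
  element to a non-constant polynomial. Take for P the square-zero extension A \<oplus> A with
  product (x, x')(y, y') = (x y, x y'), and send a to (a, 0) + (0, a) x. This is multiplicative
  because (0, a) annihilates everything from the left, while (a, 0)(0, b) = (0, a b) supplies
  the linear coefficient of the product. Since Pnc only tests algebras on a fixed type, P is
  first transported there along an injection of A \<times> A.\<close>

locale nc_algebra =
  fixes A :: "('f::field, 'a) nc_alg"
  assumes zero_closed: "zero A \<in> carrier A"
    and add_closed: "\<And>x y. x \<in> carrier A \<Longrightarrow> y \<in> carrier A \<Longrightarrow> add A x y \<in> carrier A"
    and mul_closed: "\<And>x y. x \<in> carrier A \<Longrightarrow> y \<in> carrier A \<Longrightarrow> mul A x y \<in> carrier A"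
    and smul_closed: "\<And>c x. x \<in> carrier A \<Longrightarrow> smul A c x \<in> carrier A"
    and add_assoc: "\<And>x y z. x \<in> carrier A \<Longrightarrow> y \<in> carrier A \<Longrightarrow> z \<in> carrier A \<Longrightarrow>
      add A (add A x y) z = add A x (add A y z)"
    and add_commute: "\<And>x y. x \<in> carrier A \<Longrightarrow> y \<in> carrier A \<Longrightarrow> add A x y = add A y x"
    and add_zero_left: "\<And>x. x \<in> carrier A \<Longrightarrow> add A (zero A) x = x"
    and add_inverse_ex: "\<And>x. x \<in> carrier A \<Longrightarrow> \<exists>y\<in>carrier A. add A x y = zero A"
    and mul_assoc: "\<And>x y z. x \<in> carrier A \<Longrightarrow> y \<in> carrier A \<Longrightarrow> z \<in> carrier A \<Longrightarrow>
      mul A (mul A x y) z = mul A x (mul A y z)"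
    and distrib_left: "\<And>x y z. x \<in> carrier A \<Longrightarrow> y \<in> carrier A \<Longrightarrow> z \<in> carrier A \<Longrightarrow>
      mul A x (add A y z) = add A (mul A x y) (mul A x z)"
    and distrib_right: "\<And>x y z. x \<in> carrier A \<Longrightarrow> y \<in> carrier A \<Longrightarrow> z \<in> carrier A \<Longrightarrow>
      mul A (add A x y) z = add A (mul A x z) (mul A y z)"
    and smul_add: "\<And>c x y. x \<in> carrier A \<Longrightarrow> y \<in> carrier A \<Longrightarrow>
      smul A c (add A x y) = add A (smul A c x) (smul A c y)"
    and add_smul: "\<And>c d x. x \<in> carrier A \<Longrightarrow> smul A (c + d) x = add A (smul A c x) (smul A d x)"
    and smul_smul: "\<And>c d x. x \<in> carrier A \<Longrightarrow> smul A (c * d) x = smul A c (smul A d x)"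
    and smul_one: "\<And>x. x \<in> carrier A \<Longrightarrow> smul A 1 x = x"
    and smul_mul_left: "\<And>c x y. x \<in> carrier A \<Longrightarrow> y \<in> carrier A \<Longrightarrow>
      smul A c (mul A x y) = mul A (smul A c x) y"
    and smul_mul_right: "\<And>c x y. x \<in> carrier A \<Longrightarrow> y \<in> carrier A \<Longrightarrow>
      smul A c (mul A x y) = mul A x (smul A c y)"

lemma is_alg_iff_nc_algebra: "is_alg A \<longleftrightarrow> nc_algebra A"
  unfolding is_alg_def nc_algebra_def by (simp add: Ball_def conj_assoc)

context nc_algebra
begin

lemma add_zero_right: "x \<in> carrier A \<Longrightarrow> add A x (zero A) = x"
  using add_commute add_zero_left zero_closed by metis

lemma idempotent_imp_zero:
  assumes x: "x \<in> carrier A" and idem: "add A x x = x"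
  shows "x = zero A"
proof -
  obtain y where y: "y \<in> carrier A" "add A x y = zero A"
    using add_inverse_ex x by blast
  have "add A (add A x x) y = add A x (add A x y)"
    using add_assoc x y by blast
  then show ?thesis
    using idem y add_zero_right x by simp
qed

lemma mul_zero_left: "x \<in> carrier A \<Longrightarrow> mul A (zero A) x = zero A"
  using distrib_right[of "zero A" "zero A" x] add_zero_left[of "zero A"]
  by (simp add: idempotent_imp_zero mul_closed zero_closed)

lemma mul_zero_right: "x \<in> carrier A \<Longrightarrow> mul A x (zero A) = zero A"
  using distrib_left[of x "zero A" "zero A"] add_zero_left[of "zero A"]
  by (simp add: idempotent_imp_zero mul_closed zero_closed)

lemma smul_zero: "smul A c (zero A) = zero A"
  using smul_add[of "zero A" "zero A" c] add_zero_left[of "zero A"]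
  by (simp add: idempotent_imp_zero smul_closed zero_closed)

lemma alg_sum_closed: "(\<And>i. i < m \<Longrightarrow> f i \<in> carrier A) \<Longrightarrow> alg_sum A f m \<in> carrier A"
  by (induction m) (auto simp: add_closed zero_closed)

lemma alg_sum_zero: "(\<And>i. i < m \<Longrightarrow> f i = zero A) \<Longrightarrow> alg_sum A f m = zero A"
  by (induction m) (auto simp: add_zero_left zero_closed)

end

lemma alg_hom_zero:
  assumes A: "nc_algebra A" and B: "nc_algebra B" and \<phi>: "alg_hom A B \<phi>"
  shows "\<phi> (zero A) = zero B"
proof -
  interpret A: nc_algebra A by fact
  interpret B: nc_algebra B by fact
  have "add B (\<phi> (zero A)) (\<phi> (zero A)) = \<phi> (zero A)"
    using \<phi> A.zero_closed A.add_zero_left[of "zero A"] unfolding alg_hom_def by metis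
  moreover have "\<phi> (zero A) \<in> carrier B"
    using \<phi> A.zero_closed unfolding alg_hom_def by blast
  ultimately show ?thesis
    using B.idempotent_imp_zero by blast
qed

lemma alg_hom_alg_sum:
  assumes A: "nc_algebra A" and B: "nc_algebra B" and \<phi>: "alg_hom A B \<phi>"
    and f: "\<And>i. i < m \<Longrightarrow> f i \<in> carrier A"
  shows "\<phi> (alg_sum A f m) = alg_sum B (\<lambda>i. \<phi> (f i)) m"
  using f
proof (induction m)
  case 0
  then show ?case using alg_hom_zero[OF A B \<phi>] by simp
next
  case (Suc m)
  then show ?case
    using \<phi> nc_algebra.alg_sum_closed[OF A, of m f] unfolding alg_hom_def by simp
qed

lemma alg_hom_poly_map:
  assumes P: "nc_algebra P" and C: "nc_algebra C"
    and \<psi>: "alg_hom A (poly_alg P) \<psi>" and e: "alg_hom P C e"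
  shows "alg_hom A (poly_alg C) (\<lambda>a n. e (\<psi> a n))"
proof -
  have coeff_closed: "\<psi> x n \<in> carrier P" if "x \<in> carrier A" for x n
    using \<psi> that unfolding alg_hom_def poly_alg_def by auto
  have finite_support: "finite {n. e (\<psi> x n) \<noteq> zero C}" if "x \<in> carrier A" for x
  proof (rule finite_subset)
    show "finite {n. \<psi> x n \<noteq> zero P}"
      using \<psi> that unfolding alg_hom_def poly_alg_def by auto
    show "{n. e (\<psi> x n) \<noteq> zero C} \<subseteq> {n. \<psi> x n \<noteq> zero P}"
      using alg_hom_zero[OF P C e] by auto
  qed
  have mul: "e (\<psi> (mul A x y) n) = mul (poly_alg C) (\<lambda>n. e (\<psi> x n)) (\<lambda>n. e (\<psi> y n)) n"
    if x: "x \<in> carrier A" and y: "y \<in> carrier A" for x y n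
  proof -
    have "e (\<psi> (mul A x y) n) = e (alg_sum P (\<lambda>i. mul P (\<psi> x i) (\<psi> y (n - i))) (Suc n))"
      using \<psi> x y unfolding alg_hom_def by (simp add: poly_alg_def)
    also have "\<dots> = alg_sum C (\<lambda>i. e (mul P (\<psi> x i) (\<psi> y (n - i)))) (Suc n)"
      by (rule alg_hom_alg_sum[OF P C e]) (simp add: nc_algebra.mul_closed[OF P] coeff_closed x y)
    also have "\<dots> = alg_sum C (\<lambda>i. mul C (e (\<psi> x i)) (e (\<psi> y (n - i)))) (Suc n)"
      using e coeff_closed x y unfolding alg_hom_def by simp
    finally show ?thesis
      by (simp add: poly_alg_def)
  qed
  show ?thesis
    using \<psi> e coeff_closed finite_support mul unfolding alg_hom_def by (auto simp: poly_alg_def)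
qed

definition transport_alg :: "('f, 'b) nc_alg \<Rightarrow> ('b \<Rightarrow> 'c) \<Rightarrow> ('f, 'c) nc_alg" where
  "transport_alg B e =
     \<lparr> carrier = e ` carrier B,
       add = (\<lambda>x y. e (add B (inv_into (carrier B) e x) (inv_into (carrier B) e y))),
       mul = (\<lambda>x y. e (mul B (inv_into (carrier B) e x) (inv_into (carrier B) e y))),
       zero = e (zero B),
       smul = (\<lambda>c x. e (smul B c (inv_into (carrier B) e x))) \<rparr>"

context
  fixes B :: "('f::field, 'b) nc_alg" and e :: "'b \<Rightarrow> 'c"
  assumes B: "nc_algebra B" and inj: "inj_on e (carrier B)"
begin

interpretation B: nc_algebra B by (fact B)

lemma alg_hom_transport_alg: "alg_hom B (transport_alg B e) e"
  using inj unfolding alg_hom_def transport_alg_def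
  by (simp add: B.add_closed B.mul_closed B.smul_closed)

lemma nc_algebra_transport_alg: "nc_algebra (transport_alg B e)"
  by (unfold_locales; auto simp: transport_alg_def inj B.zero_closed B.add_closed B.mul_closed
      B.smul_closed B.add_assoc B.add_zero_left B.mul_assoc B.distrib_left B.distrib_right
      B.smul_add B.add_smul B.smul_smul B.smul_one;
      metis B.add_commute B.add_inverse_ex B.smul_mul_left B.smul_mul_right)

end

lemma exists_inj_on_Times_into_Plus:
  fixes S :: "'a set"
  shows "\<exists>e :: 'a \<times> 'a \<Rightarrow> 'a + 'b + nat. inj_on e (S \<times> S)"
proof (cases "finite S")
  case True
  then obtain f :: "'a \<times> 'a \<Rightarrow> nat" where "inj_on f (S \<times> S)"
    using finite_imp_inj_to_nat_seg[of "S \<times> S"] by blast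
  then have "inj_on (Inr \<circ> Inr \<circ> f) (S \<times> S)"
    by (simp add: comp_inj_on)
  then show ?thesis by blast
next
  case False
  then obtain f where "bij_betw f (S \<times> S) S"
    using card_of_ordIso[THEN iffD2, OF card_of_Times_same_infinite] by blast
  then have "inj_on (Inl \<circ> f) (S \<times> S)"
    by (simp add: bij_betw_def comp_inj_on)
  then show ?thesis by blast
qed

lemma Pnc_coeff_eq_zero:
  fixes A :: "('f::field, 'a) nc_alg" and P :: "('f, 'b) nc_alg" and e :: "'b \<Rightarrow> 'a + 'f + nat"
  assumes a: "a \<in> Pnc A" and P: "nc_algebra P" and inj: "inj_on e (carrier P)"
    and \<psi>: "alg_hom A (poly_alg P) \<psi>" and n: "1 \<le> n"
  shows "\<psi> a n = zero P"
proof -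
  define C where "C = transport_alg P e"
  have C: "nc_algebra C" and e: "alg_hom P C e"
    unfolding C_def using nc_algebra_transport_alg[OF P inj] alg_hom_transport_alg[OF P inj] .
  have "alg_hom A (poly_alg C) (\<lambda>x n. e (\<psi> x n))"
    by (rule alg_hom_poly_map[OF P C \<psi> e])
  with a C have "e (\<psi> a n) = zero C"
    using n unfolding Pnc_def is_alg_iff_nc_algebra by blast
  then have "e (\<psi> a n) = e (zero P)"
    by (simp add: C_def transport_alg_def)
  moreover have "\<psi> a n \<in> carrier P" "zero P \<in> carrier P"
    using a \<psi> nc_algebra.zero_closed[OF P] unfolding Pnc_def alg_hom_def poly_alg_def by auto
  ultimately show ?thesis
    using inj by (auto dest: inj_onD)
qed

lemma (in nc_algebra) zero_in_Pnc: "zero A \<in> Pnc A"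
  unfolding Pnc_def
proof (intro CollectI conjI zero_closed allI impI)
  fix C :: "('f, 'a + 'f + nat) nc_alg" and \<phi> n
  assume "is_alg C \<and> alg_hom A (poly_alg C) \<phi>"
  then have C: "nc_algebra C" and \<phi>: "alg_hom A (poly_alg C) \<phi>"
    by (simp_all add: is_alg_iff_nc_algebra)
  have "add (poly_alg C) (\<phi> (zero A)) (\<phi> (zero A)) = \<phi> (zero A)"
    using \<phi> zero_closed add_zero_left[OF zero_closed] unfolding alg_hom_def by metis
  then have "add C (\<phi> (zero A) n) (\<phi> (zero A) n) = \<phi> (zero A) n"
    by (simp add: poly_alg_def fun_eq_iff)
  moreover have "\<phi> (zero A) n \<in> carrier C"
    using \<phi> zero_closed unfolding alg_hom_def poly_alg_def by auto
  ultimately show "\<phi> (zero A) n = zero C"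
    using nc_algebra.idempotent_imp_zero[OF C] by blast
qed

definition square_zero_ext :: "('f, 'a) nc_alg \<Rightarrow> ('f, 'a \<times> 'a) nc_alg" where
  "square_zero_ext A =
     \<lparr> carrier = carrier A \<times> carrier A,
       add = (\<lambda>(x, x') (y, y'). (add A x y, add A x' y')),
       mul = (\<lambda>(x, x') (y, y'). (mul A x y, mul A x y')),
       zero = (zero A, zero A),
       smul = (\<lambda>c (x, x'). (smul A c x, smul A c x')) \<rparr>"

definition square_zero_ext_poly :: "('f, 'a) nc_alg \<Rightarrow> 'a \<Rightarrow> nat \<Rightarrow> 'a \<times> 'a" where
  "square_zero_ext_poly A a n =
     (if n = 0 then (a, zero A) else if n = 1 then (zero A, a) else (zero A, zero A))"

context nc_algebra
begin

lemma nc_algebra_square_zero_ext: "nc_algebra (square_zero_ext A)"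
  by (unfold_locales; auto simp: square_zero_ext_def zero_closed add_closed mul_closed
      smul_closed add_assoc add_zero_left mul_assoc distrib_left distrib_right
      smul_add add_smul smul_smul smul_one;
      metis add_commute add_inverse_ex smul_mul_left smul_mul_right)

lemma alg_hom_square_zero_ext_poly:
  "alg_hom A (poly_alg (square_zero_ext A)) (square_zero_ext_poly A)"
proof -
  let ?P = "square_zero_ext A" and ?p = "square_zero_ext_poly A"
  have mul: "?p (mul A x y) n = mul (poly_alg ?P) (?p x) (?p y) n"
    if x: "x \<in> carrier A" and y: "y \<in> carrier A" for x y n
  proof (cases "n \<le> 1")
    case True
    then consider "n = 0" | "n = 1" by linarith
    then show ?thesis
      by cases (simp_all add: poly_alg_def square_zero_ext_def square_zero_ext_poly_def
          numeral_2_eq_2 x y zero_closed mul_closed add_zero_left add_zero_right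
          mul_zero_left mul_zero_right)
  next
    case False
    have "mul ?P (?p x i) (?p y (n - i)) = zero ?P" if "i < Suc n" for i
      using False by (cases "i = 0")
        (auto simp: square_zero_ext_def square_zero_ext_poly_def x y zero_closed
          mul_zero_left mul_zero_right)
    then have "alg_sum ?P (\<lambda>i. mul ?P (?p x i) (?p y (n - i))) (Suc n) = zero ?P"
      by (rule nc_algebra.alg_sum_zero[OF nc_algebra_square_zero_ext])
    then show ?thesis
      using False by (simp add: poly_alg_def square_zero_ext_def square_zero_ext_poly_def)
  qed
  have "finite {n. ?p x n \<noteq> zero ?P}" for x
    by (rule finite_subset[of _ "{0, 1}"]) (auto simp: square_zero_ext_def square_zero_ext_poly_def)
  then show ?thesis
    using mul unfolding alg_hom_def
    by (auto simp: poly_alg_def square_zero_ext_def square_zero_ext_poly_def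
        zero_closed add_closed smul_closed add_zero_left smul_zero)
qed

end

theorem mainTheorem9:
  fixes A :: "('f::field, 'a) nc_alg"
  assumes "is_alg A"
  shows "Pnc A = {zero A}"
proof -
  interpret A: nc_algebra A
    using assms by (simp add: is_alg_iff_nc_algebra)
  have "a = zero A" if a: "a \<in> Pnc A" for a
  proof -
    obtain e :: "'a \<times> 'a \<Rightarrow> 'a + 'f + nat" where "inj_on e (carrier (square_zero_ext A))"
      using exists_inj_on_Times_into_Plus by (fastforce simp: square_zero_ext_def)
    then have "square_zero_ext_poly A a 1 = zero (square_zero_ext A)"
      using Pnc_coeff_eq_zero[OF a A.nc_algebra_square_zero_ext] A.alg_hom_square_zero_ext_poly
      by blast
    then show ?thesis
      by (simp add: square_zero_ext_poly_def square_zero_ext_def)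
  qed
  then show ?thesis
    using A.zero_in_Pnc by blast
qed

end
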